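(* Let $p$ be an odd prime, $\omega=e^{2\pi i/p}$, $m\ge1$, $Q=T_{(p^m)}$ and $K=K_Q(p)$. Let $M=S_\xi X^b$ and $M'=S_{\xi'}X^{b'}$ be elements of $K$ (with $S_\xi,S_{\xi'}\in Q$, $b,b'\in\mathbb{Z}_p$) such that $[M,M']=\omega^c\mathbbm{1}$ for some $c\in\mathbb{Z}_p$. Then: (1) if $b=b'=0$, then $M,M'\in Q$ and $c=0$; (2) if $b\neq0$ and $b'=0$, then $M'\in T_{(p)}$, and if moreover $c=0$ then $M'\in Z(K)$; (3) if $b\neq0$ and $b'\neq0$, then there exist $a,y\in\mathbb{Z}_p$ and $S_\chi\in T_{(p)}$ such that $\omega^aM'=(MS_\chi)^y$, where $\chi(q)=\omega^{c'q}$ with $c'\in\mathbb{Z}_p$ satisfying $b'c'=-c$, and $yb=b'$; if moreover $c=0$, then $\omega^aM'=M^y$.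
   Context: Let $\{|q\rangle:q\in\mathbb{Z}_p\}$ be the computational basis of $\mathbb{C}^p$ and $X|q\rangle=|q+1\rangle$. For $\xi:\mathbb{Z}_p\to U(1)$ let $S_\xi=\mathrm{diag}(\xi(0),\dots,\xi(p-1))$. $T=\{S_\xi:\prod_{q}\xi(q)=1\}$ and $T_{(p^k)}=\{S\in T:S^{p^k}=\mathbbm{1}\}$. $K_Q(p)$ is the subgroup of $SU(p)$ generated by all $S_\xi X^b$ with $S_\xi\in Q$, $b\in\mathbb{Z}_p$. $Z(K)$ denotes the center of $K$. The commutator is $[A,B]=ABA^{-1}B^{-1}$. *)

theory Defs
  imports Complex_Main "Jordan_Normal_Form.Matrix"
begin

text \<open>Computational basis of C^p indexed by 0..p-1 (= Z_p). Shift X|q> = |q+1 mod p>.\<close>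
definition Xsh :: "nat \<Rightarrow> complex mat" where
  "Xsh p = mat p p (\<lambda>(i,j). if i = (j + 1) mod p then 1 else 0)"

definition Sdiag :: "nat \<Rightarrow> (nat \<Rightarrow> complex) \<Rightarrow> complex mat" where
  "Sdiag p \<xi> = mat p p (\<lambda>(i,j). if i = j then \<xi> i else 0)"

definition Tgrp :: "nat \<Rightarrow> complex mat set" where
  "Tgrp p = {Sdiag p \<xi> | \<xi>. (\<forall>q<p. cmod (\<xi> q) = 1) \<and> (\<Prod>q<p. \<xi> q) = 1}"

definition Tpow :: "nat \<Rightarrow> nat \<Rightarrow> complex mat set" where
  "Tpow p k = {S \<in> Tgrp p. S ^\<^sub>m (p ^ k) = 1\<^sub>m p}"

definition minv :: "complex mat \<Rightarrow> complex mat" where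
  "minv A = (THE B. B \<in> carrier_mat (dim_row A) (dim_row A) \<and> A * B = 1\<^sub>m (dim_row A)
                  \<and> B * A = 1\<^sub>m (dim_row A))"

definition comm :: "complex mat \<Rightarrow> complex mat \<Rightarrow> complex mat" where
  "comm A B = A * B * minv A * minv B"

inductive_set gen_grp :: "nat \<Rightarrow> complex mat set \<Rightarrow> complex mat set" for p G where
  gen: "A \<in> G \<Longrightarrow> A \<in> gen_grp p G"
| one: "1\<^sub>m p \<in> gen_grp p G"
| mult: "A \<in> gen_grp p G \<Longrightarrow> B \<in> gen_grp p G \<Longrightarrow> A * B \<in> gen_grp p G"
| inv: "A \<in> gen_grp p G \<Longrightarrow> minv A \<in> gen_grp p G"

definition KQ :: "nat \<Rightarrow> complex mat set \<Rightarrow> complex mat set" where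
  "KQ p Q = gen_grp p {S * (Xsh p ^\<^sub>m b) | S b. S \<in> Q \<and> b < p}"

definition center :: "complex mat set \<Rightarrow> complex mat set" where
  "center K = {A \<in> K. \<forall>B \<in> K. A * B = B * A}"

end

(* Every generator S_xi X^b of K is a weighted shift: its only nonzero entry in column j
   is xi ((j + b) mod p), in row (j + b) mod p.  Products of weighted shifts are weighted
   shifts, so the relation M M' = omega^c M' M becomes a functional equation between the
   weights, and since a nonzero b generates Z_p, weights invariant under translation by b
   are constant.
   (1) For b = b' = 0 both matrices are diagonal, hence commute, so omega^c = 1.
   (2) For b' = 0 the weights satisfy xi'(j) = omega^c xi'(j + b); multiplying by a suitable
   character makes them translation invariant, and det M' = 1 with p odd gives xi'^p = 1.
   If c = 0, xi' itself is constant, so M' is scalar.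
   (3) The character chi makes N = M S_chi commute with M'.  Both M' and N^y are weighted
   shifts by b' commuting with N, so their ratio is a constant, which comparing
   determinants shows to be a p-th root of unity. *)

theory Submission
  imports Defs "HOL-Number_Theory.Pocklington"
begin

section \<open>Residues modulo p and roots of unity\<close>

lemma prod_lessThan_mod_shift:
  fixes b p :: nat
  assumes "0 < p"
  shows "(\<Prod>j<p. f ((j + b) mod p)) = (\<Prod>j<p. f j)"
proof -
  have inj: "inj_on (\<lambda>j. (j + b) mod p) {..<p}"
    by (rule inj_onI) (metis cong_def cong_add_rcancel_nat cong_less_modulus_unique_nat lessThan_iff)
  have "(\<lambda>j. (j + b) mod p) ` {..<p} = {..<p}"
    using assms by (intro endo_inj_surj inj) auto
  then show ?thesis using prod.reindex[OF inj, of f] by simp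
qed

lemma coprime_less_prime: "prime p \<Longrightarrow> 0 < b \<Longrightarrow> b < (p :: nat) \<Longrightarrow> coprime b p"
  using prime_nat_iff'' coprime_commute by blast

lemma mod_translation_invariant_imp_const:
  fixes p b :: nat
  assumes "coprime b p" and r: "\<And>j. j < p \<Longrightarrow> r ((j + b) mod p) = r j" and j: "j < p"
  shows "r j = r 0"
proof -
  have orbit: "r ((k * b) mod p) = r 0" for k
  proof (induction k)
    case (Suc k)
    have "(Suc k * b) mod p = ((k * b) mod p + b) mod p"
      by (metis mod_add_left_eq mult_Suc add.commute)
    with Suc r[of "(k * b) mod p"] j show ?case by simp
  qed simp
  obtain k where "[b * k = j] (mod p)" using cong_solve[OF assms(1)] by blast
  then have "j = (k * b) mod p" using j by (simp add: cong_def mult.commute)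
  with orbit show ?thesis by simp
qed

lemma root_unity_power_cong:
  fixes z :: "'a :: monoid_mult"
  assumes "z ^ p = 1" and "[n = n'] (mod p)"
  shows "z ^ n = z ^ n'"
proof -
  have "z ^ k = z ^ (k mod p)" for k
    by (metis assms(1) div_mult_mod_eq power_add power_mult mult.commute power_one mult_1)
  with assms(2) show ?thesis by (metis cong_def)
qed

lemma prod_powers_root_unity_odd:
  fixes z :: "'a :: comm_monoid_mult"
  assumes "odd n" and "z ^ n = 1"
  shows "(\<Prod>k<n. z ^ k) = 1"
proof -
  obtain t where n: "n = Suc (2 * t)" using assms(1) by (metis oddE Suc_eq_plus1)
  have "2 * (\<Sum>k\<le>2 * t. k) = 2 * t * (2 * t + 1)"
    using double_gauss_sum[where 'a = nat, of "2 * t"] by (simp add: atLeast0AtMost)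
  then have "(\<Sum>k<n. k) = t * n" by (simp add: n lessThan_Suc_atMost)
  then have "(\<Prod>k<n. z ^ k) = (z ^ n) ^ t"
    by (simp add: power_sum[symmetric] power_mult[symmetric] mult.commute)
  with assms(2) show ?thesis by simp
qed

lemma twisted_shift_invariant_power_eq_1:
  fixes r :: "nat \<Rightarrow> 'a :: field"
  assumes p: "odd p" and b: "coprime b p" and z: "z ^ p = 1"
    and rec: "\<And>j. j < p \<Longrightarrow> r j = z * r ((j + b) mod p)" and prod: "(\<Prod>j<p. r j) = 1"
    and j: "j < p"
  shows "r j ^ p = 1"
proof -
  obtain v where v: "[b * v = 1] (mod p)" using cong_solve[OF b] by blast
  \<comment> \<open>Since \<open>w ^ b = z\<close>, the function \<open>\<lambda>i. r i * w ^ i\<close> is invariant under translation by b.\<close>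
  define w where "w = z ^ v"
  have "w ^ p = (z ^ p) ^ v" unfolding w_def by (simp only: power_mult[symmetric] mult.commute)
  with z have wp: "w ^ p = 1" by simp
  have "w ^ b = z ^ (b * v)" by (simp add: w_def power_mult[symmetric] mult.commute)
  also have "\<dots> = z" using root_unity_power_cong[OF z v] by simp
  finally have wb: "w ^ b = z" .
  have "r ((i + b) mod p) * w ^ ((i + b) mod p) = r i * w ^ i" if "i < p" for i
  proof -
    have "w ^ ((i + b) mod p) = w ^ i * z"
      using root_unity_power_cong[OF wp, of "(i + b) mod p" "i + b"] wb
      by (simp add: cong_def power_add)
    then show ?thesis using rec[OF that] by (simp add: ac_simps)
  qed
  then have const: "r i * w ^ i = r 0" if "i < p" for i
    using mod_translation_invariant_imp_const[OF b _ that, of "\<lambda>i. r i * w ^ i"] by simp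
  have "(\<Prod>i<p. r 0) = (\<Prod>i<p. r i * w ^ i)" using const by (intro prod.cong) auto
  also have "\<dots> = 1"
    using prod prod_powers_root_unity_odd[OF p wp] by (simp add: prod.distrib)
  finally have "(r j * w ^ j) ^ p = 1" using const[OF j] by simp
  moreover have "(w ^ j) ^ p = (w ^ p) ^ j" by (simp only: power_mult[symmetric] mult.commute)
  ultimately show ?thesis using wp by (simp add: power_mult_distrib)
qed

lemma cis_2pi_div_power: "cis (2 * pi / p) ^ k = cis (2 * pi * k / p)" for p k :: nat
  by (simp add: DeMoivre mult.commute)

lemma cis_2pi_div_power_self: "0 < p \<Longrightarrow> cis (2 * pi / p) ^ p = 1" for p :: nat
  by (simp add: cis_2pi_div_power)

lemma root_unity_eq_cis_2pi_div_power:
  fixes p :: nat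
  assumes "0 < p" and "z ^ p = 1"
  shows "\<exists>a<p. z = cis (2 * pi / p) ^ a"
  using bij_betw_roots_unity[OF assms(1)] assms(2)
  by (force simp: bij_betw_def cis_2pi_div_power)

lemma cis_2pi_div_power_eq_1_iff:
  fixes c p :: nat
  assumes "c < p"
  shows "cis (2 * pi / p) ^ c = 1 \<longleftrightarrow> c = 0"
proof
  assume "cis (2 * pi / p) ^ c = 1"
  then have eq: "cis (2 * pi * real c / real p) = cis (2 * pi * real 0 / real p)"
    by (simp add: cis_2pi_div_power)
  have "inj_on (\<lambda>k. cis (2 * pi * real k / real p)) {..<p}"
    using bij_betw_roots_unity[of p] assms by (simp add: bij_betw_def)
  from inj_onD[OF this eq] assms show "c = 0" by simp
qed simp

section \<open>Matrices, inverses and commutators\<close>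

lemma one_smult_mat [simp]: "1 \<cdot>\<^sub>m A = (A :: 'a :: monoid_mult mat)"
  by (intro eq_matI) auto

lemma mult_pow_mat_commute:
  assumes A: "A \<in> carrier_mat n n"
  shows "A * A ^\<^sub>m k = A ^\<^sub>m k * A"
proof (induction k)
  case 0
  show ?case using A by simp
next
  case (Suc k)
  have "A * A ^\<^sub>m Suc k = (A * A ^\<^sub>m k) * A"
    using assoc_mult_mat[OF A pow_carrier_mat[OF A] A] by simp
  with Suc show ?case by simp
qed

lemma minv_eq_m_inv: "A \<in> carrier_mat n n \<Longrightarrow> minv A = inv\<^bsub>ring_mat TYPE(complex) n b\<^esub> A"
  by (simp add: minv_def m_inv_def ring_mat_def)

lemma (in monoid) Units_commutator_mult:
  assumes "x \<in> Units G" "y \<in> Units G"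
  shows "x \<otimes> y \<otimes> inv x \<otimes> inv y \<otimes> (y \<otimes> x) = x \<otimes> y"
  using assms by (metis Units_closed Units_inv_closed Units_l_inv m_assoc m_closed r_one)

lemma comm_eq_smult_one_mat:
  assumes A: "A \<in> Units (ring_mat TYPE(complex) n b)" and B: "B \<in> Units (ring_mat TYPE(complex) n b)"
    and comm: "comm A B = z \<cdot>\<^sub>m 1\<^sub>m n"
  shows "A * B = z \<cdot>\<^sub>m (B * A)"
proof -
  interpret semiring "ring_mat TYPE(complex) n b" by (rule semiring_mat)
  have carr: "A \<in> carrier_mat n n" "B \<in> carrier_mat n n"
    using A B Units_closed by (auto simp: ring_mat_simps)
  have "A * B = comm A B * (B * A)"
    using Units_commutator_mult[OF A B] carr
    by (simp add: comm_def minv_eq_m_inv[of A n b] minv_eq_m_inv[of B n b] ring_mat_simps)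
  also have "\<dots> = z \<cdot>\<^sub>m (B * A)"
    using mult_smult_assoc_mat[OF one_carrier_mat mult_carrier_mat[OF carr(2) carr(1)]] carr
    by (simp add: comm)
  finally show ?thesis .
qed

lemma gen_grp_subset_Units:
  assumes "G \<subseteq> Units (ring_mat TYPE(complex) p b)"
  shows "gen_grp p G \<subseteq> Units (ring_mat TYPE(complex) p b)"
proof
  interpret semiring "ring_mat TYPE(complex) p b" by (rule semiring_mat)
  fix A assume "A \<in> gen_grp p G"
  then show "A \<in> Units (ring_mat TYPE(complex) p b)"
  proof induction
    case (gen A)
    with assms show ?case by auto
  next
    case one
    show ?case using Units_one_closed by (simp add: ring_mat_simps)
  next
    case (mult A B)
    then show ?case using Units_m_closed by (simp add: ring_mat_simps)
  next
    case (inv A)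
    then have "A \<in> carrier_mat p p" using Units_closed by (simp add: ring_mat_simps)
    with inv show ?case using Units_inv_Units by (simp add: minv_eq_m_inv[of A p b])
  qed
qed

lemma smult_one_mat_mem_center:
  assumes "s \<cdot>\<^sub>m 1\<^sub>m p \<in> K" and "K \<subseteq> carrier_mat p p"
  shows "s \<cdot>\<^sub>m 1\<^sub>m p \<in> center K"
proof -
  have "s \<cdot>\<^sub>m 1\<^sub>m p * B = B * (s \<cdot>\<^sub>m 1\<^sub>m p)" if "B \<in> carrier_mat p p" for B
    using mult_smult_assoc_mat[OF one_carrier_mat that] mult_smult_distrib[OF that one_carrier_mat]
      that by simp
  with assms show ?thesis by (auto simp: center_def)
qed

section \<open>Weighted shifts\<close>

definition wshift :: "nat \<Rightarrow> (nat \<Rightarrow> 'a :: zero) \<Rightarrow> nat \<Rightarrow> 'a mat" where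
  "wshift p f b = mat p p (\<lambda>(i, j). if i = (j + b) mod p then f j else 0)"

lemma wshift_carrier_mat [simp]: "wshift p f b \<in> carrier_mat p p"
  by (simp add: wshift_def)

lemma dim_wshift [simp]: "dim_row (wshift p f b) = p" "dim_col (wshift p f b) = p"
  by (simp_all add: wshift_def)

lemma index_wshift:
  "i < p \<Longrightarrow> j < p \<Longrightarrow> wshift p f b $$ (i, j) = (if i = (j + b) mod p then f j else 0)"
  by (simp add: wshift_def)

lemma wshift_cong:
  "(\<And>j. j < p \<Longrightarrow> f j = g j) \<Longrightarrow> b mod p = d mod p \<Longrightarrow> wshift p f b = wshift p g d"
  unfolding wshift_def
  by (intro eq_matI) (auto simp: mod_add_right_eq[symmetric, of _ b] mod_add_right_eq[symmetric, of _ d])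

lemma wshift_eq_iff: "wshift p f b = wshift p g b \<longleftrightarrow> (\<forall>j<p. f j = g j)"
proof
  assume eq: "wshift p f b = wshift p g b"
  show "\<forall>j<p. f j = g j"
  proof (intro allI impI)
    fix j assume j: "j < p"
    then have "wshift p f b $$ ((j + b) mod p, j) = wshift p g b $$ ((j + b) mod p, j)"
      using eq by simp
    then show "f j = g j" using j by (simp add: index_wshift)
  qed
qed (auto intro: wshift_cong)

lemma wshift_mult:
  fixes f g :: "nat \<Rightarrow> 'a :: semiring_0"
  assumes "0 < p"
  shows "wshift p f b * wshift p g d = wshift p (\<lambda>j. f ((j + d) mod p) * g j) (b + d)"
proof (rule eq_matI)
  fix i j assume "i < dim_row (wshift p (\<lambda>j. f ((j + d) mod p) * g j) (b + d))"
    and "j < dim_col (wshift p (\<lambda>j. f ((j + d) mod p) * g j) (b + d))"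
  then have i: "i < p" and j: "j < p" by auto
  let ?k = "(j + d) mod p"
  have "(wshift p f b * wshift p g d) $$ (i, j) =
      (\<Sum>k\<in>{0..<p}. wshift p f b $$ (i, k) * wshift p g d $$ (k, j))"
    using i j by (simp add: scalar_prod_def)
  also have "\<dots> = (\<Sum>k\<in>{0..<p}. if k = ?k then (if i = (k + b) mod p then f k else 0) * g j else 0)"
    using i j by (intro sum.cong) (auto simp: index_wshift)
  also have "\<dots> = (if i = (?k + b) mod p then f ?k else 0) * g j"
    using assms by simp
  also have "(?k + b) mod p = (j + (b + d)) mod p"
    by (metis add.assoc add.commute mod_add_left_eq)
  finally show "(wshift p f b * wshift p g d) $$ (i, j) =
      wshift p (\<lambda>j. f ((j + d) mod p) * g j) (b + d) $$ (i, j)"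
    using i j by (simp add: index_wshift)
qed auto

lemma smult_wshift:
  fixes f :: "nat \<Rightarrow> 'a :: semiring_0"
  shows "a \<cdot>\<^sub>m wshift p f b = wshift p (\<lambda>j. a * f j) b"
  unfolding wshift_def by (intro eq_matI) auto

lemma one_mat_eq_wshift: "1\<^sub>m p = wshift p (\<lambda>_. 1) 0"
  unfolding wshift_def by (intro eq_matI) auto

lemma Sdiag_eq_wshift: "Sdiag p f = wshift p f 0"
  unfolding wshift_def Sdiag_def by (intro eq_matI) auto

lemma Xsh_power_eq_wshift:
  assumes "0 < p"
  shows "Xsh p ^\<^sub>m b = wshift p (\<lambda>_. 1) b"
proof (induction b)
  case 0
  show ?case by (simp add: Xsh_def one_mat_eq_wshift)
next
  case (Suc b)
  have "Xsh p = wshift p (\<lambda>_. 1) 1"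
    unfolding wshift_def Xsh_def by (intro eq_matI) auto
  with Suc show ?case using assms by (simp add: wshift_mult)
qed

lemma Sdiag_mult_Xsh_power:
  "0 < p \<Longrightarrow> Sdiag p \<xi> * Xsh p ^\<^sub>m b = wshift p (\<lambda>j. \<xi> ((j + b) mod p)) b"
  by (simp add: Sdiag_eq_wshift Xsh_power_eq_wshift wshift_mult)

lemma wshift_mult_Sdiag:
  "0 < p \<Longrightarrow> wshift p f b * Sdiag p g = wshift p (\<lambda>j. f j * g j) b"
  by (simp add: Sdiag_eq_wshift wshift_mult) (rule wshift_cong, simp_all)

lemma wshift_power:
  fixes f :: "nat \<Rightarrow> 'a :: comm_semiring_1"
  assumes "0 < p"
  shows "wshift p f b ^\<^sub>m n = wshift p (\<lambda>j. \<Prod>i<n. f ((j + i * b) mod p)) (b * n)"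
proof (induction n)
  case 0
  show ?case by (simp add: one_mat_eq_wshift)
next
  case (Suc n)
  have "wshift p f b ^\<^sub>m Suc n =
      wshift p (\<lambda>j. (\<Prod>i<n. f (((j + b) mod p + i * b) mod p)) * f j) (b * n + b)"
    using Suc assms by (simp add: wshift_mult)
  also have "\<dots> = wshift p (\<lambda>j. \<Prod>i<Suc n. f ((j + i * b) mod p)) (b * Suc n)"
  proof (rule wshift_cong)
    fix j assume "j < p"
    then show "(\<Prod>i<n. f (((j + b) mod p + i * b) mod p)) * f j = (\<Prod>i<Suc n. f ((j + i * b) mod p))"
      by (simp only: prod.lessThan_Suc_shift mod_add_left_eq mult_Suc add.assoc)
        (simp add: mult.commute)
  qed (simp add: add.commute)
  finally show ?case .
qed

lemma wshift_mem_Units: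
  fixes f :: "nat \<Rightarrow> 'a :: field"
  assumes p: "0 < p" and f: "\<And>j. j < p \<Longrightarrow> f j \<noteq> 0"
  shows "wshift p f b \<in> Units (ring_mat TYPE('a) p c)"
proof -
  define d where "d = p - b mod p"
  define g where "g j = 1 / f ((j + d) mod p)" for j
  have bd: "(b + d) mod p = 0"
    unfolding d_def using p by (metis le_add_diff_inverse mod_add_left_eq mod_le_divisor mod_self)
  have "wshift p f b * wshift p g d = 1\<^sub>m p"
    unfolding one_mat_eq_wshift wshift_mult[OF p]
    by (rule wshift_cong) (use f p bd in \<open>auto simp: g_def\<close>)
  moreover have "wshift p g d * wshift p f b = 1\<^sub>m p"
    unfolding one_mat_eq_wshift wshift_mult[OF p]
  proof (rule wshift_cong)
    fix j assume j: "j < p"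
    have "((j + b) mod p + d) mod p = j"
      using bd j by (metis add.assoc mod_add_left_eq mod_add_right_eq add_0_right mod_less)
    then show "g ((j + b) mod p) * f j = 1" using f[OF j] by (simp add: g_def)
  qed (use bd in \<open>simp add: add.commute\<close>)
  ultimately show ?thesis
    unfolding Units_def by (auto simp: ring_mat_simps intro!: bexI[of _ "wshift p g d"])
qed

lemma wshift_commute_iff:
  fixes f g :: "nat \<Rightarrow> 'a :: comm_semiring_1"
  assumes "0 < p"
  shows "wshift p f b * wshift p g d = z \<cdot>\<^sub>m (wshift p g d * wshift p f b) \<longleftrightarrow>
    (\<forall>j<p. f ((j + d) mod p) * g j = z * (g ((j + b) mod p) * f j))"
  using assms by (simp add: wshift_mult smult_wshift add.commute wshift_eq_iff)

lemma wshift_Sdiag_commute_iff: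
  fixes f g :: "nat \<Rightarrow> complex"
  assumes "0 < p"
  shows "wshift p f b * Sdiag p g = z \<cdot>\<^sub>m (Sdiag p g * wshift p f b) \<longleftrightarrow>
    (\<forall>j<p. f j * g j = z * (g ((j + b) mod p) * f j))"
  using assms by (auto simp: Sdiag_eq_wshift wshift_commute_iff)

lemma wshift_commutant_proportional:
  fixes h f g :: "nat \<Rightarrow> 'a :: field"
  assumes b: "coprime b p" and p: "0 < p"
    and h: "\<And>j. j < p \<Longrightarrow> h j \<noteq> 0" and g: "\<And>j. j < p \<Longrightarrow> g j \<noteq> 0"
    and hf: "wshift p h b * wshift p f d = wshift p f d * wshift p h b"
    and hg: "wshift p h b * wshift p g d = wshift p g d * wshift p h b"
  obtains s where "\<And>j. j < p \<Longrightarrow> f j = s * g j"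
proof -
  have ef: "\<forall>j<p. h ((j + d) mod p) * f j = f ((j + b) mod p) * h j"
    using hf wshift_commute_iff[OF p, of h b f d 1] by simp
  have eg: "\<forall>j<p. h ((j + d) mod p) * g j = g ((j + b) mod p) * h j"
    using hg wshift_commute_iff[OF p, of h b g d 1] by simp
  define r where "r j = f j / g j" for j
  have "r ((j + b) mod p) = r j" if j: "j < p" for j
  proof -
    have "f ((j + b) mod p) = h ((j + d) mod p) * f j / h j"
      using ef j h[OF j] by (simp add: eq_divide_eq)
    moreover have "g ((j + b) mod p) = h ((j + d) mod p) * g j / h j"
      using eg j h[OF j] by (simp add: eq_divide_eq)
    moreover have "h ((j + d) mod p) \<noteq> 0" using h p by simp
    ultimately show ?thesis using h[OF j] by (simp add: r_def)
  qed
  then have const: "r j = r 0" if "j < p" for j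
    using mod_translation_invariant_imp_const[OF b _ that] by blast
  show thesis
  proof (rule that)
    fix j assume j: "j < p"
    have "f j = r j * g j" using g[OF j] by (simp add: r_def)
    then show "f j = r 0 * g j" using const[OF j] by simp
  qed
qed

section \<open>The diagonal group\<close>

lemma Sdiag_mem_Tgrp_iff:
  "Sdiag p \<xi> \<in> Tgrp p \<longleftrightarrow> (\<forall>q<p. cmod (\<xi> q) = 1) \<and> (\<Prod>q<p. \<xi> q) = 1"
proof
  assume "Sdiag p \<xi> \<in> Tgrp p"
  then obtain \<eta> where eq: "Sdiag p \<xi> = Sdiag p \<eta>"
    and \<eta>: "\<forall>q<p. cmod (\<eta> q) = 1" "(\<Prod>q<p. \<eta> q) = 1"
    unfolding Tgrp_def by blast
  from eq have "\<forall>q<p. \<xi> q = \<eta> q" by (simp add: Sdiag_eq_wshift wshift_eq_iff)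
  moreover from this have "(\<Prod>q<p. \<xi> q) = (\<Prod>q<p. \<eta> q)" by simp
  ultimately show "(\<forall>q<p. cmod (\<xi> q) = 1) \<and> (\<Prod>q<p. \<xi> q) = 1"
    using \<eta> by simp
qed (auto simp: Tgrp_def)

lemma Sdiag_mem_Tgrp_nonzero: "Sdiag p \<xi> \<in> Tgrp p \<Longrightarrow> j < p \<Longrightarrow> \<xi> j \<noteq> 0"
  by (auto simp: Sdiag_mem_Tgrp_iff)

lemma Sdiag_shift_mem_Tgrp:
  "0 < p \<Longrightarrow> Sdiag p \<xi> \<in> Tgrp p \<Longrightarrow> Sdiag p (\<lambda>j. \<xi> ((j + b) mod p)) \<in> Tgrp p"
  by (simp add: Sdiag_mem_Tgrp_iff prod_lessThan_mod_shift)

lemma Sdiag_mult_mem_Tgrp: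
  "Sdiag p f \<in> Tgrp p \<Longrightarrow> Sdiag p g \<in> Tgrp p \<Longrightarrow> Sdiag p (\<lambda>j. f j * g j) \<in> Tgrp p"
  by (simp add: Sdiag_mem_Tgrp_iff norm_mult prod.distrib)

lemma Sdiag_power: "0 < p \<Longrightarrow> Sdiag p \<xi> ^\<^sub>m n = Sdiag p (\<lambda>j. \<xi> j ^ n)"
  by (simp add: Sdiag_eq_wshift wshift_power) (rule wshift_cong, simp_all)

lemma Sdiag_mem_Tpow_1I:
  assumes p: "0 < p" and pow: "\<forall>q<p. \<xi> q ^ p = 1" and prod: "(\<Prod>q<p. \<xi> q) = 1"
  shows "Sdiag p \<xi> \<in> Tpow p 1"
proof -
  have "cmod (\<xi> q) = 1" if "q < p" for q
    using power_eq_1_iff[of "\<xi> q" p] pow that p by auto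
  then have "Sdiag p \<xi> \<in> Tgrp p" using prod by (simp add: Sdiag_mem_Tgrp_iff)
  moreover have "Sdiag p \<xi> ^\<^sub>m p = 1\<^sub>m p"
    using p pow by (simp add: Sdiag_power) (simp add: Sdiag_eq_wshift one_mat_eq_wshift wshift_eq_iff)
  ultimately show ?thesis by (simp add: Tpow_def)
qed

lemma Sdiag_character_mem_Tpow_1:
  assumes p: "odd p" and z: "z ^ p = 1"
  shows "Sdiag p (\<lambda>q. z ^ (k * q)) \<in> Tpow p 1"
proof (rule Sdiag_mem_Tpow_1I)
  show "0 < p" using p by (simp add: odd_pos)
  have "(z ^ (k * q)) ^ p = (z ^ p) ^ (k * q)" for q
    by (simp only: power_mult[symmetric] mult_ac)
  then show "\<forall>q<p. (z ^ (k * q)) ^ p = 1" using z by simp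
  have "(z ^ k) ^ p = 1"
    using z by (simp only: power_mult[symmetric] mult.commute[of k p]) (simp add: power_mult)
  then show "(\<Prod>q<p. z ^ (k * q)) = 1"
    using prod_powers_root_unity_odd[OF p] by (simp add: power_mult)
qed

lemma KQ_subset_Units:
  assumes p: "0 < p" and Q: "Q \<subseteq> Tgrp p"
  shows "KQ p Q \<subseteq> Units (ring_mat TYPE(complex) p b)"
  unfolding KQ_def
proof (rule gen_grp_subset_Units, safe)
  fix S d assume "S \<in> Q"
  with Q have "S \<in> Tgrp p" by auto
  moreover from this obtain \<xi> where S: "S = Sdiag p \<xi>"
    unfolding Tgrp_def by auto
  ultimately have T: "Sdiag p \<xi> \<in> Tgrp p" by simp
  have "Sdiag p (\<lambda>j. \<xi> ((j + d) mod p)) \<in> Tgrp p"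
    using Sdiag_shift_mem_Tgrp[OF p T] .
  then show "S * Xsh p ^\<^sub>m d \<in> Units (ring_mat TYPE(complex) p b)"
    unfolding S Sdiag_mult_Xsh_power[OF p]
    by (intro wshift_mem_Units[OF p]) (rule Sdiag_mem_Tgrp_nonzero)
qed

lemma KQ_subset_carrier_mat:
  "0 < p \<Longrightarrow> Q \<subseteq> Tgrp p \<Longrightarrow> KQ p Q \<subseteq> carrier_mat p p"
  using KQ_subset_Units[of p Q "()"] by (auto simp: Units_def ring_mat_simps)

lemma KQ_comm_eq_smult_one_mat:
  assumes "0 < p" "Q \<subseteq> Tgrp p" "A \<in> KQ p Q" "B \<in> KQ p Q" "comm A B = z \<cdot>\<^sub>m 1\<^sub>m p"
  shows "A * B = z \<cdot>\<^sub>m (B * A)"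
  using KQ_subset_Units[OF assms(1,2), of "()"] assms(3-5) by (blast intro: comm_eq_smult_one_mat)

section \<open>Commuting up to a scalar\<close>

lemma Sdiag_commute_smult_imp_eq_1:
  fixes f g :: "nat \<Rightarrow> complex"
  assumes "0 < p" "f 0 \<noteq> 0" "g 0 \<noteq> 0"
    and "Sdiag p f * Sdiag p g = z \<cdot>\<^sub>m (Sdiag p g * Sdiag p f)"
  shows "z = 1"
  using assms by (auto simp: Sdiag_eq_wshift wshift_commute_iff)

lemma Sdiag_twisted_commute_imp_eq_0:
  fixes p c :: nat and f g :: "nat \<Rightarrow> complex"
  assumes p: "0 < p" and c: "c < p" and f: "Sdiag p f \<in> Tgrp p" and g: "Sdiag p g \<in> Tgrp p"
    and rel: "Sdiag p f * Sdiag p g = cis (2 * pi / p) ^ c \<cdot>\<^sub>m (Sdiag p g * Sdiag p f)"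
  shows "c = 0"
proof -
  have "cis (2 * pi / p) ^ c = 1"
    by (rule Sdiag_commute_smult_imp_eq_1[OF p Sdiag_mem_Tgrp_nonzero[OF f p]
          Sdiag_mem_Tgrp_nonzero[OF g p] rel])
  with c show ?thesis by (simp add: cis_2pi_div_power_eq_1_iff)
qed

lemma Sdiag_twisted_commute_mem_Tpow_1:
  fixes f g :: "nat \<Rightarrow> complex"
  assumes "odd p" "coprime b p" "z ^ p = 1" "Sdiag p f \<in> Tgrp p" "Sdiag p g \<in> Tgrp p"
    and "wshift p f b * Sdiag p g = z \<cdot>\<^sub>m (Sdiag p g * wshift p f b)"
  shows "Sdiag p g \<in> Tpow p 1"
proof -
  have p: "0 < p" using assms(1) by (simp add: odd_pos)
  have rel: "\<forall>j<p. f j * g j = z * (g ((j + b) mod p) * f j)"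
    using assms(6) wshift_Sdiag_commute_iff[OF p] by blast
  have rec: "g j = z * g ((j + b) mod p)" if "j < p" for j
  proof -
    have "f j * g j = z * (g ((j + b) mod p) * f j)" using rel that by blast
    also have "\<dots> = f j * (z * g ((j + b) mod p))" by (simp only: mult_ac)
    finally
    show ?thesis using Sdiag_mem_Tgrp_nonzero[OF assms(4) that] by simp
  qed
  have "(\<Prod>j<p. g j) = 1" using assms(5) by (simp add: Sdiag_mem_Tgrp_iff)
  then have "\<forall>q<p. g q ^ p = 1"
    using twisted_shift_invariant_power_eq_1[where r = g, OF assms(1-3) rec] by blast
  then show ?thesis
    using p assms(5) by (intro Sdiag_mem_Tpow_1I) (simp_all add: Sdiag_mem_Tgrp_iff)
qed

lemma Sdiag_commute_wshift_eq_smult_one: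
  fixes f g :: "nat \<Rightarrow> complex"
  assumes "coprime b p" "0 < p" "\<And>j. j < p \<Longrightarrow> f j \<noteq> 0"
    and "wshift p f b * Sdiag p g = Sdiag p g * wshift p f b"
  shows "Sdiag p g = g 0 \<cdot>\<^sub>m 1\<^sub>m p"
proof -
  have rel: "\<forall>j<p. f j * g j = g ((j + b) mod p) * f j"
    using assms(4) wshift_Sdiag_commute_iff[OF assms(2), of f b g 1] by simp
  have "g ((j + b) mod p) = g j" if "j < p" for j
  proof -
    have "f j * g j = g ((j + b) mod p) * f j" using rel that by blast
    also have "\<dots> = f j * g ((j + b) mod p)" by (rule mult.commute)
    finally show ?thesis using assms(3)[OF that] by simp
  qed
  then have "\<forall>j<p. g j = g 0"
    using mod_translation_invariant_imp_const[OF assms(1)] by blast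
  then show ?thesis
    unfolding Sdiag_eq_wshift one_mat_eq_wshift smult_wshift mult_1_right wshift_eq_iff .
qed

lemma wshift_Sdiag_twisted_commute:
  fixes p b c :: nat and f g :: "nat \<Rightarrow> complex"
  defines "\<omega> \<equiv> cis (2 * pi / p)"
  assumes p: "prime p" "odd p" and b: "b \<noteq> 0" "b < p"
    and f: "Sdiag p f \<in> Tgrp p" and g: "Sdiag p g \<in> Tgrp p"
    and rel: "wshift p f b * Sdiag p g = \<omega> ^ c \<cdot>\<^sub>m (Sdiag p g * wshift p f b)"
  shows "Sdiag p g \<in> Tpow p 1 \<and> (c = 0 \<longrightarrow> Sdiag p g = g 0 \<cdot>\<^sub>m 1\<^sub>m p)"
proof
  have p0: "0 < p" using p(1) prime_gt_0_nat by blast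
  have cop: "coprime b p" using coprime_less_prime p(1) b by auto
  have "(\<omega> ^ c) ^ p = (\<omega> ^ p) ^ c" by (simp only: power_mult[symmetric] mult.commute)
  then have "(\<omega> ^ c) ^ p = 1" using p0 by (simp add: \<omega>_def cis_2pi_div_power_self)
  then show "Sdiag p g \<in> Tpow p 1"
    using Sdiag_twisted_commute_mem_Tpow_1[OF p(2) cop _ f g rel] by blast
  show "c = 0 \<longrightarrow> Sdiag p g = g 0 \<cdot>\<^sub>m 1\<^sub>m p"
  proof
    assume "c = 0"
    with rel have "wshift p f b * Sdiag p g = Sdiag p g * wshift p f b" by simp
    then show "Sdiag p g = g 0 \<cdot>\<^sub>m 1\<^sub>m p"
      using Sdiag_commute_wshift_eq_smult_one[OF cop p0] Sdiag_mem_Tgrp_nonzero[OF f] by blast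
  qed
qed

lemma wshift_mult_character_commute:
  fixes f g :: "nat \<Rightarrow> complex"
  assumes p: "0 < p" and z: "z ^ p = 1" and c': "(b' * c' + c) mod p = 0"
    and rel: "wshift p f b * wshift p g b' = z ^ c \<cdot>\<^sub>m (wshift p g b' * wshift p f b)"
  shows "wshift p f b * Sdiag p (\<lambda>q. z ^ (c' * q)) * wshift p g b' =
    wshift p g b' * (wshift p f b * Sdiag p (\<lambda>q. z ^ (c' * q)))"
proof -
  have twist: "z ^ c * z ^ (c' * ((j + b') mod p)) = z ^ (c' * j)" for j
  proof -
    have "[c + c' * ((j + b') mod p) = c + c' * (j + b')] (mod p)"
      by (intro cong_add cong_mult) (simp_all add: cong_def)
    also have "c + c' * (j + b') = c' * j + (b' * c' + c)" by (simp add: algebra_simps)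
    also have "[\<dots> = c' * j + 0] (mod p)" using c' by (intro cong_add) (simp_all add: cong_def)
    finally have "z ^ (c + c' * ((j + b') mod p)) = z ^ (c' * j + 0)"
      by (rule root_unity_power_cong[OF z])
    then show ?thesis by (simp add: power_add)
  qed
  have "f ((j + b') mod p) * z ^ (c' * ((j + b') mod p)) * g j =
      1 * (g ((j + b) mod p) * (f j * z ^ (c' * j)))" if "j < p" for j
  proof -
    have rel_j: "f ((j + b') mod p) * g j = z ^ c * (g ((j + b) mod p) * f j)"
      using rel that wshift_commute_iff[OF p] by blast
    have "f ((j + b') mod p) * z ^ (c' * ((j + b') mod p)) * g j =
        (f ((j + b') mod p) * g j) * z ^ (c' * ((j + b') mod p))"
      by (simp only: mult_ac)
    also have "\<dots> = g ((j + b) mod p) * f j * (z ^ c * z ^ (c' * ((j + b') mod p)))"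
      by (subst rel_j) (simp only: mult_ac)
    finally show ?thesis unfolding twist by (simp only: mult_ac mult_1_left)
  qed
  then show ?thesis
    using wshift_commute_iff[OF p, of "\<lambda>j. f j * z ^ (c' * j)" b g b' 1]
    by (simp add: wshift_mult_Sdiag[OF p])
qed

lemma wshift_commute_eq_root_unity_smult_power:
  fixes h g :: "nat \<Rightarrow> complex"
  assumes p: "0 < p" and b: "coprime b p" and y: "[b * y = b'] (mod p)"
    and h: "Sdiag p h \<in> Tgrp p" and g: "Sdiag p g \<in> Tgrp p"
    and comm: "wshift p h b * wshift p g b' = wshift p g b' * wshift p h b"
  shows "\<exists>a<p. cis (2 * pi / p) ^ a \<cdot>\<^sub>m wshift p g b' = wshift p h b ^\<^sub>m y"
proof -
  define G where "G j = (\<Prod>i<y. h ((j + i * b) mod p))" for j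
  have power: "wshift p h b ^\<^sub>m y = wshift p G b'"
    unfolding wshift_power[OF p] G_def using y by (intro wshift_cong) (simp_all add: cong_def)
  have "(\<Prod>j<p. G j) = (\<Prod>i<y. \<Prod>j<p. h ((j + i * b) mod p))"
    unfolding G_def by (rule prod.swap)
  also have "\<dots> = 1"
    using h by (simp add: prod_lessThan_mod_shift[OF p] Sdiag_mem_Tgrp_iff)
  finally have GT: "Sdiag p G \<in> Tgrp p"
    using h p by (simp add: Sdiag_mem_Tgrp_iff G_def prod_norm[symmetric])
  have "wshift p h b * wshift p G b' = wshift p G b' * wshift p h b"
    using mult_pow_mat_commute[of "wshift p h b" p y] power by simp
  then obtain s where s: "\<And>j. j < p \<Longrightarrow> g j = s * G j"
    using wshift_commutant_proportional[OF b p _ _ comm] Sdiag_mem_Tgrp_nonzero[OF h]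
      Sdiag_mem_Tgrp_nonzero[OF GT] by blast
  have "1 = (\<Prod>j<p. g j)" using g by (simp add: Sdiag_mem_Tgrp_iff)
  also have "\<dots> = (\<Prod>j<p. s * G j)" using s by (intro prod.cong) auto
  also have "\<dots> = s ^ p" using GT by (simp add: prod.distrib Sdiag_mem_Tgrp_iff)
  finally have "(1 / s) ^ p = 1" by (simp add: power_one_over)
  then obtain a where a: "a < p" "1 / s = cis (2 * pi / p) ^ a"
    using root_unity_eq_cis_2pi_div_power[OF p] by blast
  have "s \<noteq> 0" using a by auto
  then have "cis (2 * pi / p) ^ a \<cdot>\<^sub>m wshift p g b' = wshift p G b'"
    unfolding a(2)[symmetric] smult_wshift by (intro wshift_cong) (simp_all add: s)
  with a(1) power show ?thesis by auto
qed

lemma wshift_twisted_commute_eq_power: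
  fixes p b b' c :: nat and f g :: "nat \<Rightarrow> complex"
  defines "\<omega> \<equiv> cis (2 * pi / p)"
  assumes p: "prime p" "odd p" and b: "b \<noteq> 0" "b < p" and b': "b' \<noteq> 0" "b' < p" and c: "c < p"
    and f: "Sdiag p f \<in> Tgrp p" and g: "Sdiag p g \<in> Tgrp p"
    and rel: "wshift p f b * wshift p g b' = \<omega> ^ c \<cdot>\<^sub>m (wshift p g b' * wshift p f b)"
  shows "\<exists>a y c'. a < p \<and> y < p \<and> c' < p \<and> (b' * c' + c) mod p = 0 \<and> (y * b) mod p = b'
    \<and> Sdiag p (\<lambda>q. \<omega> ^ (c' * q)) \<in> Tpow p 1
    \<and> \<omega> ^ a \<cdot>\<^sub>m wshift p g b' = (wshift p f b * Sdiag p (\<lambda>q. \<omega> ^ (c' * q))) ^\<^sub>m y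
    \<and> (c = 0 \<longrightarrow> \<omega> ^ a \<cdot>\<^sub>m wshift p g b' = wshift p f b ^\<^sub>m y)"
proof -
  have p0: "0 < p" using p(1) prime_gt_0_nat by blast
  have \<omega>: "\<omega> ^ p = 1" unfolding \<omega>_def using p0 by (rule cis_2pi_div_power_self)
  have cop: "coprime b p" "coprime b' p" using coprime_less_prime p(1) b b' by auto
  obtain c' where c': "c' < p" "[b' * c' = p - c] (mod p)"
    using cong_solve_unique[OF cop(2), of "p - c"] p0 by auto
  have "[b' * c' + c = p - c + c] (mod p)" using c'(2) by (intro cong_add) simp_all
  then have c'c: "(b' * c' + c) mod p = 0" using c by (simp add: cong_def)
  obtain y where y: "y < p" "[b * y = b'] (mod p)"
    using cong_solve_unique[OF cop(1), of b'] p0 by auto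
  then have yb: "(y * b) mod p = b'" using b' by (simp add: cong_def mult.commute)
  define \<chi> where "\<chi> = (\<lambda>q. \<omega> ^ (c' * q))"
  have \<chi>: "Sdiag p \<chi> \<in> Tpow p 1"
    unfolding \<chi>_def using Sdiag_character_mem_Tpow_1[OF p(2) \<omega>] .
  have N: "wshift p f b * Sdiag p \<chi> = wshift p (\<lambda>j. f j * \<chi> j) b"
    by (rule wshift_mult_Sdiag[OF p0])
  have "Sdiag p (\<lambda>j. f j * \<chi> j) \<in> Tgrp p"
    using f \<chi> by (intro Sdiag_mult_mem_Tgrp) (auto simp: Tpow_def)
  moreover have "wshift p (\<lambda>j. f j * \<chi> j) b * wshift p g b' = wshift p g b' * wshift p (\<lambda>j. f j * \<chi> j) b"
    using wshift_mult_character_commute[OF p0 \<omega> c'c rel] N by (simp add: \<chi>_def)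
  ultimately obtain a where a: "a < p" "\<omega> ^ a \<cdot>\<^sub>m wshift p g b' = (wshift p f b * Sdiag p \<chi>) ^\<^sub>m y"
    using wshift_commute_eq_root_unity_smult_power[OF p0 cop(1) y(2) _ g] N
    unfolding \<omega>_def by auto
  have "Sdiag p \<chi> = 1\<^sub>m p" if "c = 0"
  proof -
    have "[b' * c' = b' * 0] (mod p)" using c'(2) that by (simp add: cong_def)
    then have "[c' = 0] (mod p)" by (simp only: cong_mult_lcancel_nat[OF cop(2)])
    then have "c' = 0" using cong_less_modulus_unique_nat c'(1) p0 by blast
    then show ?thesis by (simp add: \<chi>_def Sdiag_eq_wshift one_mat_eq_wshift)
  qed
  then have "c = 0 \<longrightarrow> \<omega> ^ a \<cdot>\<^sub>m wshift p g b' = wshift p f b ^\<^sub>m y"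
    using a(2) by simp
  note facts = a(1) y(1) c'(1) c'c yb \<chi>[unfolded \<chi>_def] a(2)[unfolded \<chi>_def] this
  show ?thesis by (intro exI[of _ a] exI[of _ y] exI[of _ c'] conjI) (fact facts)+
qed

theorem lemma3:
  fixes p m b b' c :: nat and \<xi> \<xi>' :: "nat \<Rightarrow> complex"
  defines "\<omega> \<equiv> cis (2 * pi / p)"
  defines "Q \<equiv> Tpow p m"
  defines "K \<equiv> KQ p Q"
  defines "M \<equiv> Sdiag p \<xi> * Xsh p ^\<^sub>m b"
  defines "M' \<equiv> Sdiag p \<xi>' * Xsh p ^\<^sub>m b'"
  assumes "prime p" and "odd p" and "m \<ge> 1"
    and "Sdiag p \<xi> \<in> Q" and "Sdiag p \<xi>' \<in> Q"
    and "b < p" and "b' < p" and "c < p"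
    and "M \<in> K" and "M' \<in> K"
    and "comm M M' = (\<omega> ^ c) \<cdot>\<^sub>m 1\<^sub>m p"
  shows "(b = 0 \<and> b' = 0 \<longrightarrow> M \<in> Q \<and> M' \<in> Q \<and> c = 0)
    \<and> (b \<noteq> 0 \<and> b' = 0 \<longrightarrow> M' \<in> Tpow p 1 \<and> (c = 0 \<longrightarrow> M' \<in> center K))
    \<and> (b \<noteq> 0 \<and> b' \<noteq> 0 \<longrightarrow>
        (\<exists>a y c'. a < p \<and> y < p \<and> c' < p
          \<and> (b' * c' + c) mod p = 0 \<and> (y * b) mod p = b'
          \<and> Sdiag p (\<lambda>q. \<omega> ^ (c' * q)) \<in> Tpow p 1
          \<and> (\<omega> ^ a) \<cdot>\<^sub>m M' = (M * Sdiag p (\<lambda>q. \<omega> ^ (c' * q))) ^\<^sub>m y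
          \<and> (c = 0 \<longrightarrow> (\<omega> ^ a) \<cdot>\<^sub>m M' = M ^\<^sub>m y)))"
proof -
  have p: "0 < p" using \<open>prime p\<close> prime_gt_0_nat by blast
  have QT: "Q \<subseteq> Tgrp p" by (auto simp: Q_def Tpow_def)
  then have T: "Sdiag p \<xi> \<in> Tgrp p" "Sdiag p \<xi>' \<in> Tgrp p"
    using \<open>Sdiag p \<xi> \<in> Q\<close> \<open>Sdiag p \<xi>' \<in> Q\<close> by auto
  have K: "K \<subseteq> carrier_mat p p"
    unfolding K_def using p QT by (rule KQ_subset_carrier_mat)
  have rel: "M * M' = \<omega> ^ c \<cdot>\<^sub>m (M' * M)"
    using KQ_comm_eq_smult_one_mat[OF p QT] \<open>M \<in> K\<close> \<open>M' \<in> K\<close> \<open>comm M M' = \<omega> ^ c \<cdot>\<^sub>m 1\<^sub>m p\<close>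
    unfolding K_def by blast
  have M: "M = wshift p (\<lambda>j. \<xi> ((j + b) mod p)) b"
    and M': "M' = wshift p (\<lambda>j. \<xi>' ((j + b') mod p)) b'"
    unfolding M_def M'_def using p by (simp_all add: Sdiag_mult_Xsh_power)
  have shiftT: "Sdiag p (\<lambda>j. \<xi> ((j + b) mod p)) \<in> Tgrp p"
    "Sdiag p (\<lambda>j. \<xi>' ((j + b') mod p)) \<in> Tgrp p"
    using Sdiag_shift_mem_Tgrp[OF p] T by blast+
  have diag: "M = Sdiag p \<xi>" if "b = 0"
    using that right_mult_one_mat[OF wshift_carrier_mat] by (simp add: M_def Xsh_def Sdiag_eq_wshift)
  have diag': "M' = Sdiag p \<xi>'" if "b' = 0"
    using that right_mult_one_mat[OF wshift_carrier_mat] by (simp add: M'_def Xsh_def Sdiag_eq_wshift)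
  have diagonal_case: "M \<in> Q \<and> M' \<in> Q \<and> c = 0" if "b = 0" "b' = 0"
    using Sdiag_twisted_commute_imp_eq_0[OF p \<open>c < p\<close> T rel[unfolded diag[OF that(1)] diag'[OF that(2)] \<omega>_def]]
      diag[OF that(1)] diag'[OF that(2)] \<open>Sdiag p \<xi> \<in> Q\<close> \<open>Sdiag p \<xi>' \<in> Q\<close> by simp
  have mixed_case: "M' \<in> Tpow p 1 \<and> (c = 0 \<longrightarrow> M' \<in> center K)" if "b \<noteq> 0" "b' = 0"
    using wshift_Sdiag_twisted_commute[OF \<open>prime p\<close> \<open>odd p\<close> that(1) \<open>b < p\<close> shiftT(1) T(2)
        rel[unfolded M diag'[OF that(2)] \<omega>_def], folded diag'[OF that(2)]]
      smult_one_mat_mem_center[OF _ K] \<open>M' \<in> K\<close> by metis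
  note shift_case = wshift_twisted_commute_eq_power[OF \<open>prime p\<close> \<open>odd p\<close> _ \<open>b < p\<close> _ \<open>b' < p\<close> \<open>c < p\<close>
      shiftT rel[unfolded M M' \<omega>_def], folded \<omega>_def M M']
  show ?thesis using diagonal_case mixed_case shift_case by (intro conjI impI) auto
qed

end
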